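(* Let $n\le -1$ be an odd integer. In $\mathbb{F}_3[v]$, the irreducible polynomial $a=v^2+v-1$ divides the reduction of $g_n$ if and only if $n\equiv 1\pmod 4$; moreover $a^2$ never divides the reduction of $g_n$.
   Context: Let $a=v^2+v-1$ and $B=(v^2-1)(v^2-v-1)$. For odd $n\le -1$ with $k=(1-n)/2$, define $g_n$ by $g_n=\big[(a+b)^k-(a-b)^k-(a+b)^{k+2}+(a-b)^{k+2}\big]/b$, where $b$ is a formal square root of $B$; the expression is a polynomial in $a$ and $b^2=B$, hence $g_n\in\mathbb{Z}[v]$. *)

theory Defs
  imports "HOL-Computational_Algebra.Polynomial" "Berlekamp_Zassenhaus.Finite_Field"
begin

definition aP :: "int poly" where "aP = [:-1, 1, 1:]"
definition BP :: "int poly" where "BP = [:-1, 0, 1:] * [:-1, -1, 1:]"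

text \<open>D k = ((a+b)^k - (a-b)^k)/b with b^2 = B, written out via the binomial theorem:
  (a+b)^k - (a-b)^k = sum_j C(k,j) a^(k-j) b^j (1 - (-1)^j), so dividing by b gives
  sum over odd j of 2 C(k,j) a^(k-j) B^((j-1)/2).\<close>
definition Dpart :: "nat \<Rightarrow> int poly" where
  "Dpart k = (\<Sum>j\<in>{..k}. if odd j then smult (2 * int (k choose j)) (aP ^ (k - j) * BP ^ ((j - 1) div 2)) else 0)"

definition gpoly :: "int \<Rightarrow> int poly" where
  "gpoly n = (let k = nat ((1 - n) div 2) in Dpart k - Dpart (k + 2))"

text \<open>A three-element index type; three mod_ring is the prime field F_3.\<close>
typedef three = "{0::nat, 1, 2}" by auto

lemma card_three: "CARD(three) = 3"
  using type_definition.card[OF type_definition_three] by simp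

instance three :: finite
  by intro_classes (metis card_three card.infinite zero_neq_numeral)

instance three :: prime_card
  by intro_classes (simp add: card_three)

definition red3 :: "int poly \<Rightarrow> three mod_ring poly" where
  "red3 p = map_poly of_int p"

end

theory Submission
  imports Defs
begin

(* Write D_k(x, y) = sum over odd j <= k of 2 C(k,j) x^(k-j) y^((j-1)/2), so that
   g_n = D_k(a, B) - D_(k+2)(a, B) with k = (1-n)/2 >= 1, and n = 1 (mod 4) iff k is even.
   Modulo x^2 only the two top terms of D_k survive: D_k = 2 y^(k/2) for odd k and
   D_k = 2k x y^(k/2-1) for even k.  Hence, modulo a^2,
     k odd:   g_n = 2 B^m (1 - B),                     m = k div 2,
     k even:  g_n = a B^(m-1) (2k - (2k+4) B).
   Over F_3 the polynomial a is coprime to B, and B = 2 - 2v (mod a) is not congruent to any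
   constant modulo a; so a divides a combination c + d B only when c = d = 0.  This decides
   divisibility of g_n by a and a^2 in both cases (for k even, 3 cannot divide both 2k and 2k+4). *)

definition Dsum :: "'a::comm_ring_1 \<Rightarrow> 'a \<Rightarrow> nat \<Rightarrow> 'a" where
  "Dsum x y k = (\<Sum>j\<in>{..k}. if odd j then of_nat (2 * (k choose j)) * (x ^ (k - j) * y ^ ((j - 1) div 2)) else 0)"

text \<open>Modulo x^2 only the summands j = k and j = k - 1 of D_k survive; exactly one of
  them is odd-indexed, depending on the parity of k.\<close>
lemma Dsum_mod_sq:
  "x\<^sup>2 dvd Dsum x y k - (if odd k then 2 * y ^ (k div 2) else of_nat (2 * k) * x * y ^ (k div 2 - 1))"
proof (cases k)
  case 0
  then show ?thesis by (simp add: Dsum_def)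
next
  case (Suc l)
  define t where "t j = (if odd j then of_nat (2 * (k choose j)) * (x ^ (k - j) * y ^ ((j - 1) div 2)) else 0)" for j
  have "Dsum x y k = sum t {..<Suc (Suc l)}"
    unfolding Dsum_def t_def Suc lessThan_Suc_atMost ..
  then have split: "Dsum x y k = (\<Sum>j<l. t j) + t l + t k"
    by (simp only: sum.lessThan_Suc Suc)
  have low: "x\<^sup>2 dvd (\<Sum>j<l. t j)"
  proof (rule dvd_sum)
    fix j assume "j \<in> {..<l}"
    then have "k - j = 2 + (k - j - 2)" by (simp add: Suc)
    then have "x ^ (k - j) = x\<^sup>2 * x ^ (k - j - 2)"
      by (metis power_add)
    then show "x\<^sup>2 dvd t j" by (simp add: t_def)
  qed
  have top: "t k = (if odd k then 2 * y ^ (k div 2) else 0)"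
    by (auto simp: t_def elim!: oddE)
  have next_top: "t l = (if odd k then 0 else of_nat (2 * k) * x * y ^ (k div 2 - 1))"
    by (auto simp: t_def Suc elim!: oddE)
  show ?thesis using low by (simp add: split top next_top)
qed

lemma Dsum_diff_odd_mod_sq:
  assumes "odd k"
  shows "x\<^sup>2 dvd Dsum x y k - Dsum x y (k + 2) - 2 * y ^ (k div 2) * (1 - y)"
proof -
  have "x\<^sup>2 dvd (Dsum x y k - 2 * y ^ (k div 2)) - (Dsum x y (k + 2) - 2 * y ^ (k div 2 + 1))"
    using dvd_diff[OF Dsum_mod_sq[of x y k] Dsum_mod_sq[of x y "k + 2"]] assms by simp
  then show ?thesis by (simp add: algebra_simps)
qed

lemma Dsum_diff_even_mod_sq:
  assumes "even k" and "k \<ge> 2"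
  shows "x\<^sup>2 dvd Dsum x y k - Dsum x y (k + 2)
           - x * (y ^ (k div 2 - 1) * (of_nat (2 * k) - of_nat (2 * k + 4) * y))"
proof -
  have "(k + 2) div 2 - 1 = k div 2 - 1 + 1" using assms by auto
  then have "x\<^sup>2 dvd (Dsum x y k - of_nat (2 * k) * x * y ^ (k div 2 - 1))
                 - (Dsum x y (k + 2) - of_nat (2 * (k + 2)) * x * y ^ (k div 2 - 1 + 1))"
    using dvd_diff[OF Dsum_mod_sq[of x y k] Dsum_mod_sq[of x y "k + 2"]] assms by simp
  then show ?thesis by (simp add: algebra_simps)
qed

lemma dvd_iff_of_sq_congr:
  fixes x g r :: "'a::comm_ring_1"
  assumes "x\<^sup>2 dvd g - r"
  shows "x dvd g \<longleftrightarrow> x dvd r"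
proof -
  have "x dvd g - r" using dvd_trans[OF dvd_power[of 2 x] assms] by simp
  then show ?thesis using dvd_diff dvd_add by (metis diff_add_cancel add_diff_cancel_left')
qed

lemma sq_dvd_iff_of_sq_congr:
  fixes x g r :: "'a::idom"
  assumes "x\<^sup>2 dvd g - x * r" and "x \<noteq> 0"
  shows "x\<^sup>2 dvd g \<longleftrightarrow> x dvd r"
proof -
  have "x\<^sup>2 dvd g \<longleftrightarrow> x\<^sup>2 dvd x * r"
    using assms(1) dvd_diff dvd_add by (metis diff_add_cancel add_diff_cancel_left')
  also have "\<dots> \<longleftrightarrow> x dvd r"
    using assms(2) by (simp add: power2_eq_square)
  finally show ?thesis .
qed

lemma of_nat_three_eq_0_iff: "(of_nat m :: three mod_ring) = 0 \<longleftrightarrow> 3 dvd m"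
proof
  assume "of_nat m = (0 :: three mod_ring)"
  then show "3 dvd m" using of_nat_0_mod_ring_dvd card_three by metis
next
  assume "3 dvd m"
  then obtain j where "m = 3 * j" by blast
  moreover have "(of_nat 3 :: three mod_ring) = 0"
    using of_nat_card_eq_0[where 'a = three] by (simp only: card_three)
  ultimately show "(of_nat m :: three mod_ring) = 0" by simp
qed

lemma red3_smult_3: "red3 (smult 3 p) = 0"
proof -
  have "(3 :: three mod_ring) = 0" using of_nat_three_eq_0_iff[of 3] by simp
  then show ?thesis by (simp add: red3_def map_poly_smult hom_distribs)
qed

lemma red3_Dpart: "red3 (Dpart k) = Dsum (red3 aP) (red3 BP) k"
  unfolding red3_def Dpart_def Dsum_def of_int_poly_hom.hom_sum
  by (intro sum.cong) (auto simp: hom_distribs of_nat_poly)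

lemma red3_gpoly:
  assumes "n = 1 - 2 * int k"
  shows "red3 (gpoly n) = Dsum (red3 aP) (red3 BP) k - Dsum (red3 aP) (red3 BP) (k + 2)"
proof -
  have "nat ((1 - n) div 2) = k" using assms by simp
  then show ?thesis
    by (simp add: gpoly_def red3_def of_int_poly_hom.hom_minus red3_Dpart[unfolded red3_def])
qed

lemma red3_BP_mod_aP: "red3 BP = red3 aP * red3 (aP + [:2, -3:]) + [:2, -2:]"
proof -
  have BP_div: "BP = aP * (aP + [:2, -3:]) + [:2, -2:]" by (simp add: aP_def BP_def)
  have "red3 BP = red3 aP * red3 (aP + [:2, -3:]) + red3 [:2, -2:]"
    unfolding BP_div red3_def of_int_poly_hom.hom_add of_int_poly_hom.hom_mult ..
  also have "red3 [:2, -2:] = [:2, -2:]" by (simp add: red3_def)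
  finally show ?thesis .
qed

text \<open>a and B are coprime in F_3[v], by the Bezout relation a + (2 - 2v)(-2 - v) = 1 there.\<close>
lemma coprime_red3_aP_BP: "coprime (red3 aP) (red3 BP)"
proof (rule coprimeI)
  fix d assume dA: "d dvd red3 aP" and dB: "d dvd red3 BP"
  have "d dvd [:2, -2:]"
    using dB dvd_add_right_iff[OF dvd_mult2[OF dA]] unfolding red3_BP_mod_aP by blast
  then have "d dvd red3 aP + [:2, -2:] * [:-2, -1:]"
    by (rule dvd_add[OF dA dvd_mult2])
  also have "red3 aP + [:2, -2:] * [:-2, -1:] = red3 (aP + [:2, -2:] * [:-2, -1:])"
    by (simp add: red3_def hom_distribs)
  also have "aP + [:2, -2:] * [:-2, -1:] = 1 + smult 3 [:-2, 1, 1:]"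
    by (simp add: aP_def one_pCons)
  also have "red3 (1 + smult 3 [:-2, 1, 1:]) = 1"
    unfolding red3_def of_int_poly_hom.hom_add
    by (simp only: red3_smult_3[unfolded red3_def]) simp
  finally show "d dvd 1" .
qed

lemma red3_aP_dvd_BP_power_mult:
  "red3 aP dvd red3 BP ^ m * p \<longleftrightarrow> red3 aP dvd p"
  using coprime_red3_aP_BP by (simp add: coprime_dvd_mult_right_iff)

text \<open>1 and B are linearly independent modulo a over F_3: reducing c - d B modulo a gives
  the polynomial of degree at most 1 with coefficients c - 2d and 2d, which a (of degree 2)
  divides only if it vanishes.\<close>
lemma red3_aP_dvd_lin_comb:
  assumes "red3 aP dvd [:c:] - smult d (red3 BP)"
  shows "c = 0 \<and> d = 0"
proof -
  define L where "L = [:c - 2 * d, 2 * d:]"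
  have "[:c:] - smult d (red3 BP) = L - red3 aP * smult d (red3 (aP + [:2, -3:]))"
    unfolding red3_BP_mod_aP smult_add_right L_def mult_smult_right
    by (simp add: ac_simps)
  then have "red3 aP dvd L"
    using assms by (metis dvd_diff_commute dvd_diff_right_iff dvd_triv_left)
  moreover have "degree L < degree (red3 aP)"
    by (simp add: L_def red3_def aP_def)
  ultimately have "L = 0"
    using dvd_imp_degree_le[of "red3 aP" L] by linarith
  moreover have "(2 :: three mod_ring) \<noteq> 0"
    using of_nat_three_eq_0_iff[of 2] by simp
  ultimately show ?thesis by (auto simp: L_def)
qed

lemma red3_aP_not_dvd_odd:
  assumes "odd k"
  shows "\<not> red3 aP dvd Dsum (red3 aP) (red3 BP) k - Dsum (red3 aP) (red3 BP) (k + 2)"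
    (is "\<not> ?A dvd ?g")
proof
  let ?B = "red3 BP"
  assume "?A dvd ?g"
  then have "?A dvd 2 * ?B ^ (k div 2) * (1 - ?B)"
    using dvd_iff_of_sq_congr[OF Dsum_diff_odd_mod_sq[OF assms]] by blast
  then have "?A dvd ?B ^ (k div 2) * (2 * (1 - ?B))"
    by (simp only: mult.assoc mult.left_commute)
  then have "?A dvd [:2:] - smult 2 ?B"
    unfolding red3_aP_dvd_BP_power_mult by (simp add: numeral_poly smult_diff_right one_pCons)
  then show False
    using red3_aP_dvd_lin_comb of_nat_three_eq_0_iff[of 2] by simp
qed

lemma red3_aP_dvd_even:
  assumes "even k" and "k \<ge> 2"
  shows "red3 aP dvd Dsum (red3 aP) (red3 BP) k - Dsum (red3 aP) (red3 BP) (k + 2)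
         \<and> \<not> (red3 aP)\<^sup>2 dvd Dsum (red3 aP) (red3 BP) k - Dsum (red3 aP) (red3 BP) (k + 2)"
    (is "?A dvd ?g \<and> \<not> ?A\<^sup>2 dvd ?g")
proof
  let ?B = "red3 BP"
  note congr = Dsum_diff_even_mod_sq[OF assms, of ?A ?B]
  show "?A dvd ?g"
    using dvd_iff_of_sq_congr[OF congr] by simp
  show "\<not> ?A\<^sup>2 dvd ?g"
  proof
    have A_nz: "?A \<noteq> 0" by (simp add: red3_def aP_def)
    assume "?A\<^sup>2 dvd ?g"
    then have "?A dvd ?B ^ (k div 2 - 1) * (of_nat (2 * k) - of_nat (2 * k + 4) * ?B)"
      using sq_dvd_iff_of_sq_congr[OF congr A_nz] by simp
    then have "?A dvd [:of_nat (2 * k):] - smult (of_nat (2 * k + 4)) ?B"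
      unfolding red3_aP_dvd_BP_power_mult by (simp add: of_nat_poly)
    then have "3 dvd 2 * k" and "3 dvd 2 * k + 4"
      using red3_aP_dvd_lin_comb of_nat_three_eq_0_iff by blast+
    then show False by presburger
  qed
qed

theorem lemma5p6:
  fixes n :: int
  assumes "odd n" and "n \<le> -1"
  shows "(red3 aP dvd red3 (gpoly n) \<longleftrightarrow> n mod 4 = 1) \<and> \<not> (red3 aP ^ 2 dvd red3 (gpoly n))"
proof -
  define k where "k = nat ((1 - n) div 2)"
  have n_k: "n = 1 - 2 * int k" and k_pos: "k \<ge> 1"
    using assms unfolding k_def by (auto elim!: oddE)
  have mod4: "n mod 4 = 1 \<longleftrightarrow> even k" using n_k by presburger
  note g = red3_gpoly[OF n_k]
  show ?thesis
  proof (cases "even k")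
    case False
    then have "\<not> red3 aP dvd red3 (gpoly n)"
      unfolding g by (rule red3_aP_not_dvd_odd)
    then show ?thesis
      using False mod4 dvd_trans[OF dvd_power[of 2 "red3 aP"]] by auto
  next
    case True
    with k_pos have "k \<ge> 2" by presburger
    then show ?thesis
      using red3_aP_dvd_even[OF True] mod4 True unfolding g by simp
  qed
qed

end
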